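(* Let $(\Omega,\mathcal{F})$ be a measurable space, $T:\Omega\to\Omega$ a measurable transformation and $V$ a $T$-invariant upper probability. Then $V$ is ergodic with respect to $T$ if and only if there exists a unique $Q\in\mathcal{M}^e(T)\cap\operatorname{core}(V)$ such that for every $f\in L^1(\Omega,\mathcal{F},Q)$, $$\lim_{n\to\infty}\frac{1}{n}\sum_{i=0}^{n-1}f(T^i\omega)=\int f\,dQ\quad\text{for }V\text{-a.s. }\omega\in\Omega.$$
   Context: A capacity is a monotone map $\mu:\mathcal{F}\to[0,1]$ with $\mu(\emptyset)=0,\mu(\Omega)=1$. An upper probability is a capacity $V$ such that $V(A)=\max_{P\in\Lambda}P(A)$ for a set $\Lambda$ of probabilities compact in the weak* (setwise convergence) topology. $V$ is $T$-invariant if $V(T^{-1}A)=V(A)$ for all $A\in\mathcal{F}$. $\mathcal{I}=\{A\in\mathcal{F}:T^{-1}A=A\}$. A $T$-invariant capacity $\mu$ is ergodic if for each $B\in\mathcal{I}$, $\mu(B)\in\{0,1\}$ and ($\mu(B)=0$ or $\mu(\Omega\setminus B)=0$). $\operatorname{core}(V)$ is the set of finitely additive normalized $P:\mathcal{F}\to[0,1]$ with $P\le V$ on $\mathcal{F}$. $\mathcal{M}^e(T)$ is the set of $T$-invariant probabilities $P$ with $P(A)\in\{0,1\}$ for all $A\in\mathcal{I}$. A statement holds $V$-a.s. if it holds on a set $A\in\mathcal{F}$ with $V(\Omega\setminus A)=0$. *)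

theory Defs
  imports "HOL-Probability.Probability"
begin

definition capacity :: "'a measure \<Rightarrow> ('a set \<Rightarrow> real) \<Rightarrow> bool" where
  "capacity M V \<longleftrightarrow>
     (\<forall>A\<in>sets M. 0 \<le> V A \<and> V A \<le> 1) \<and>
     (\<forall>A\<in>sets M. \<forall>B\<in>sets M. A \<subseteq> B \<longrightarrow> V A \<le> V B) \<and>
     V {} = 0 \<and> V (space M) = 1"

text \<open>Representation of a probability measure as the function A \<mapsto> P(A) on sets M;
  the product topology on functions 'a set \<Rightarrow> real is the topology of setwise convergence.\<close>
definition setwise_repr :: "'a measure \<Rightarrow> 'a measure \<Rightarrow> ('a set \<Rightarrow> real)" where
  "setwise_repr M P = (\<lambda>A. if A \<in> sets M then measure P A else 0)"

definition upper_probability :: "'a measure \<Rightarrow> ('a set \<Rightarrow> real) \<Rightarrow> bool" where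
  "upper_probability M V \<longleftrightarrow> capacity M V \<and>
     (\<exists>\<Lambda>. \<Lambda> \<noteq> {} \<and> (\<forall>P\<in>\<Lambda>. prob_space P \<and> sets P = sets M) \<and>
          compact (setwise_repr M ` \<Lambda>) \<and>
          (\<forall>A\<in>sets M. (\<forall>P\<in>\<Lambda>. measure P A \<le> V A) \<and> (\<exists>P\<in>\<Lambda>. measure P A = V A)))"

definition T_invariant_cap :: "'a measure \<Rightarrow> ('a \<Rightarrow> 'a) \<Rightarrow> ('a set \<Rightarrow> real) \<Rightarrow> bool" where
  "T_invariant_cap M T V \<longleftrightarrow> (\<forall>A\<in>sets M. V (T -` A \<inter> space M) = V A)"

definition inv_sets :: "'a measure \<Rightarrow> ('a \<Rightarrow> 'a) \<Rightarrow> 'a set set" where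
  "inv_sets M T = {A \<in> sets M. T -` A \<inter> space M = A}"

definition ergodic_cap :: "'a measure \<Rightarrow> ('a \<Rightarrow> 'a) \<Rightarrow> ('a set \<Rightarrow> real) \<Rightarrow> bool" where
  "ergodic_cap M T V \<longleftrightarrow> T_invariant_cap M T V \<and>
     (\<forall>B\<in>inv_sets M T. (V B = 0 \<or> V B = 1) \<and> (V B = 0 \<or> V (space M - B) = 0))"

definition core :: "'a measure \<Rightarrow> ('a set \<Rightarrow> real) \<Rightarrow> ('a set \<Rightarrow> real) set" where
  "core M V = {P. (\<forall>A\<in>sets M. 0 \<le> P A \<and> P A \<le> 1 \<and> P A \<le> V A) \<and> P (space M) = 1 \<and>
      (\<forall>A\<in>sets M. \<forall>B\<in>sets M. A \<inter> B = {} \<longrightarrow> P (A \<union> B) = P A + P B)}"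

definition ergodic_probs :: "'a measure \<Rightarrow> ('a \<Rightarrow> 'a) \<Rightarrow> 'a measure set" where
  "ergodic_probs M T = {P. prob_space P \<and> sets P = sets M \<and>
      (\<forall>A\<in>sets M. measure P (T -` A \<inter> space M) = measure P A) \<and>
      (\<forall>A\<in>inv_sets M T. measure P A = 0 \<or> measure P A = 1)}"

definition cap_ae :: "'a measure \<Rightarrow> ('a set \<Rightarrow> real) \<Rightarrow> ('a \<Rightarrow> bool) \<Rightarrow> bool" where
  "cap_ae M V P \<longleftrightarrow> (\<exists>A\<in>sets M. V (space M - A) = 0 \<and> (\<forall>\<omega>\<in>A. P \<omega>))"

end

theory Submission
  imports Defs
begin

text \<open>If \<open>V\<close> is ergodic, a Krylov--Bogolyubov argument in the compact set of finitely
  additive set functions dominated by \<open>V\<close> produces a \<open>T\<close>-invariant element of the core. It is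
  \<open>\<sigma>\<close>-additive, since \<open>V\<close> is continuous at the empty set (its set of priors is compact),
  so it is a probability \<open>Q\<close>, and \<open>Q\<close> is ergodic because it is dominated by \<open>V\<close>. By
  Birkhoff's ergodic theorem the averages of \<open>f\<close> converge on an invariant set \<open>C\<close> with
  \<open>Q C = 1\<close>; then \<open>V C > 0\<close>, so ergodicity of \<open>V\<close> makes the complement of \<open>C\<close>
  \<open>V\<close>-null. Two such \<open>Q\<close> agree because the averages of an indicator converge \<open>V\<close>-a.s.
  to both values, and two \<open>V\<close>-a.s. events intersect.

  Conversely, along the orbit of a point the averages of the indicator of an invariant set \<open>B\<close>
  are constant, so \<open>V\<close>-a.s. they equal \<open>Q B \<in> {0, 1}\<close>; this forces \<open>V B = 0\<close> or
  \<open>V (\<Omega> - B) = 0\<close>.\<close>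

section \<open>Birkhoff sums and averages\<close>

definition birkhoff_sum :: "('a \<Rightarrow> 'a) \<Rightarrow> ('a \<Rightarrow> real) \<Rightarrow> nat \<Rightarrow> 'a \<Rightarrow> real" where
  "birkhoff_sum T f n x = (\<Sum>i<n. f ((T ^^ i) x))"

lemma birkhoff_sum_0 [simp]: "birkhoff_sum T f 0 x = 0"
  by (simp add: birkhoff_sum_def)

lemma birkhoff_sum_Suc: "birkhoff_sum T f (Suc n) x = f x + birkhoff_sum T f n (T x)"
  unfolding birkhoff_sum_def sum.lessThan_Suc_shift
  by (simp add: funpow_Suc_right del: funpow.simps)

lemma birkhoff_sum_diff_const:
  "birkhoff_sum T (\<lambda>x. f x - c) n x = birkhoff_sum T f n x - real n * c"
  by (simp add: birkhoff_sum_def sum_subtractf)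

lemma birkhoff_sum_const_diff:
  "birkhoff_sum T (\<lambda>x. c - f x) n x = real n * c - birkhoff_sum T f n x"
  by (simp add: birkhoff_sum_def sum_subtractf)

lemma measurable_funpow: "T \<in> measurable M M \<Longrightarrow> T ^^ n \<in> measurable M M"
  by (induction n) (simp_all add: measurable_comp)

lemma borel_measurable_birkhoff_sum:
  assumes "T \<in> measurable M M" and [measurable]: "f \<in> borel_measurable M"
  shows "birkhoff_sum T f n \<in> borel_measurable M"
proof -
  have [measurable]: "T ^^ i \<in> measurable M M" for i
    by (rule measurable_funpow[OF assms(1)])
  show ?thesis
    unfolding birkhoff_sum_def[abs_def] by measurable
qed

lemma Max_birkhoff_sum_le:
  assumes pos: "0 < Max ((\<lambda>k. birkhoff_sum T g k x) ` {..N})"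
  shows "Max ((\<lambda>k. birkhoff_sum T g k x) ` {..N})
    \<le> g x + Max ((\<lambda>k. birkhoff_sum T g k (T x)) ` {..N})"
proof -
  obtain k where "k \<le> N" and k: "Max ((\<lambda>k. birkhoff_sum T g k x) ` {..N}) = birkhoff_sum T g k x"
    using Max_in[of "(\<lambda>k. birkhoff_sum T g k x) ` {..N}"] by fastforce
  then obtain j where j: "k = Suc j"
    using pos by (cases k) simp_all
  have "birkhoff_sum T g j (T x) \<le> Max ((\<lambda>k. birkhoff_sum T g k (T x)) ` {..N})"
    using \<open>k \<le> N\<close> j by (intro Max_ge) auto
  then show ?thesis
    using k j by (simp add: birkhoff_sum_Suc)
qed

lemma bdd_above_range_iff_nat:
  fixes f :: "'b \<Rightarrow> real"
  shows "bdd_above (range f) \<longleftrightarrow> (\<exists>m::nat. \<forall>n. f n \<le> real m)"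
proof
  assume "bdd_above (range f)"
  then obtain B where "\<And>n. f n \<le> B"
    by (auto simp: bdd_above_def)
  moreover obtain m :: nat where "B \<le> real m"
    using real_arch_simple by blast
  ultimately show "\<exists>m::nat. \<forall>n. f n \<le> real m"
    by (meson order_trans)
next
  assume "\<exists>m::nat. \<forall>n. f n \<le> real m"
  then show "bdd_above (range f)"
    by (auto intro: bdd_aboveI2)
qed

lemma bdd_above_range_shift_iff:
  fixes u t :: "nat \<Rightarrow> real"
  assumes u: "\<And>n. u (Suc n) = a + t n"
  shows "bdd_above (range u) \<longleftrightarrow> bdd_above (range t)"
proof
  assume "bdd_above (range u)"
  then obtain B where B: "\<And>n. u n \<le> B"
    by (auto simp: bdd_above_def)
  have "t n \<le> B - a" for n
    using u[of n] B[of "Suc n"] by linarith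
  then show "bdd_above (range t)"
    by (rule bdd_aboveI2)
next
  assume "bdd_above (range t)"
  then obtain B where B: "\<And>n. t n \<le> B"
    by (auto simp: bdd_above_def)
  have "u n \<le> max (u 0) (a + B)" for n
  proof (cases n)
    case (Suc m)
    then show ?thesis
      using u[of m] B[of m] by simp
  qed simp
  then show "bdd_above (range u)"
    by (rule bdd_aboveI2)
qed

lemma eventually_average_less:
  fixes s :: "nat \<Rightarrow> real"
  assumes bdd: "\<And>k. bdd_above (range (\<lambda>n. s n - real n * (c + 1 / real (Suc k))))"
    and "c < a"
  shows "eventually (\<lambda>n. s n / real n < a) sequentially"
proof -
  obtain k :: nat where k: "inverse (real (Suc k)) < (a - c) / 2"
    using reals_Archimedean \<open>c < a\<close> by (metis diff_gt_0_iff_gt half_gt_zero)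
  define e where "e = 1 / real (Suc k)"
  obtain K where K: "\<And>n. s n - real n * (c + e) \<le> K"
    using bdd[of k] by (auto simp: bdd_above_def e_def)
  have "eventually (\<lambda>n. K / real n < e) sequentially"
    using lim_const_over_n[of K] by (rule order_tendstoD) (simp add: e_def)
  then show ?thesis
    using eventually_gt_at_top[of 0]
  proof eventually_elim
    case (elim n)
    have "s n \<le> real n * (c + e) + K"
      using K[of n] by linarith
    then have "s n / real n \<le> (real n * (c + e) + K) / real n"
      using elim by (intro divide_right_mono) auto
    also have "\<dots> = c + e + K / real n"
      using elim by (simp add: add_divide_distrib)
    finally show ?case
      using elim k by (simp add: e_def inverse_eq_divide)
  qed
qed

lemma LIMSEQ_average_if_bdd_above:
  fixes s :: "nat \<Rightarrow> real"
  assumes "\<And>k. bdd_above (range (\<lambda>n. s n - real n * (c + 1 / real (Suc k))))"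
    and "\<And>k. bdd_above (range (\<lambda>n. real n * (c - 1 / real (Suc k)) - s n))"
  shows "(\<lambda>n. s n / real n) \<longlonglongrightarrow> c"
proof (rule order_tendstoI)
  show "eventually (\<lambda>n. s n / real n < a) sequentially" if "c < a" for a
    using assms(1) that by (rule eventually_average_less)
  fix a assume "a < c"
  have bdd: "bdd_above (range (\<lambda>n. - s n - real n * (- c + 1 / real (Suc k))))" for k
  proof -
    have "(\<lambda>n. - s n - real n * (- c + 1 / real (Suc k))) = (\<lambda>n. real n * (c - 1 / real (Suc k)) - s n)"
      by (simp add: algebra_simps)
    then show ?thesis
      using assms(2)[of k] by (simp only:)
  qed
  have "- c < - a"
    using \<open>a < c\<close> by simp
  from eventually_average_less[where s = "\<lambda>n. - s n", OF bdd this]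
  show "eventually (\<lambda>n. a < s n / real n) sequentially"
    by simp
qed

lemma LIMSEQ_divide_Suc_iff:
  fixes x :: "nat \<Rightarrow> real"
  shows "(\<lambda>n. x n / real (Suc n)) \<longlonglongrightarrow> c \<longleftrightarrow> (\<lambda>n. x n / real n) \<longlonglongrightarrow> c"
proof -
  have eq1: "eventually (\<lambda>n. x n / real (Suc n) * (real (Suc n) / real n) = x n / real n) sequentially"
    using eventually_gt_at_top[of 0] by eventually_elim simp
  have eq2: "eventually (\<lambda>n. x n / real n * (real n / real (Suc n)) = x n / real (Suc n)) sequentially"
    using eventually_gt_at_top[of 0] by eventually_elim simp
  show ?thesis
  proof
    assume "(\<lambda>n. x n / real (Suc n)) \<longlonglongrightarrow> c"
    from tendsto_mult[OF this LIMSEQ_Suc_n_over_n] show "(\<lambda>n. x n / real n) \<longlonglongrightarrow> c"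
      using eq1 by (simp add: Lim_transform_eventually)
  next
    assume "(\<lambda>n. x n / real n) \<longlonglongrightarrow> c"
    from tendsto_mult[OF this LIMSEQ_n_over_Suc_n] show "(\<lambda>n. x n / real (Suc n)) \<longlonglongrightarrow> c"
      using eq2 by (simp add: Lim_transform_eventually)
  qed
qed

lemma LIMSEQ_average_shift_iff:
  fixes u t :: "nat \<Rightarrow> real"
  assumes "\<And>n. u (Suc n) = a + t n"
  shows "(\<lambda>n. u n / real n) \<longlonglongrightarrow> c \<longleftrightarrow> (\<lambda>n. t n / real n) \<longlonglongrightarrow> c"
proof -
  have shift: "(\<lambda>n. u (Suc n) / real (Suc n)) = (\<lambda>n. a / real (Suc n) + t n / real (Suc n))"
    by (simp add: assms add_divide_distrib del: of_nat_Suc)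
  have a: "(\<lambda>n. a / real (Suc n)) \<longlonglongrightarrow> 0"
    using LIMSEQ_Suc[OF lim_const_over_n[of a]] by simp
  have "(\<lambda>n. u n / real n) \<longlonglongrightarrow> c \<longleftrightarrow> (\<lambda>n. u (Suc n) / real (Suc n)) \<longlonglongrightarrow> c"
    using LIMSEQ_Suc[of "\<lambda>n. u n / real n" c] LIMSEQ_imp_Suc[of "\<lambda>n. u n / real n" c] by blast
  also have "\<dots> \<longleftrightarrow> (\<lambda>n. t n / real (Suc n)) \<longlonglongrightarrow> c"
    unfolding shift
  proof
    assume "(\<lambda>n. a / real (Suc n) + t n / real (Suc n)) \<longlonglongrightarrow> c"
    from tendsto_diff[OF this a] show "(\<lambda>n. t n / real (Suc n)) \<longlonglongrightarrow> c"
      by simp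
  next
    assume "(\<lambda>n. t n / real (Suc n)) \<longlonglongrightarrow> c"
    from tendsto_add[OF a this] show "(\<lambda>n. a / real (Suc n) + t n / real (Suc n)) \<longlonglongrightarrow> c"
      by simp
  qed
  also have "\<dots> \<longleftrightarrow> (\<lambda>n. t n / real n) \<longlonglongrightarrow> c"
    by (rule LIMSEQ_divide_Suc_iff)
  finally show ?thesis .
qed

section \<open>Birkhoff's ergodic theorem\<close>

locale mpt = prob_space Q for Q :: "'a measure" +
  fixes T :: "'a \<Rightarrow> 'a"
  assumes measurable_T [measurable]: "T \<in> measurable Q Q"
    and distr_T: "distr Q Q T = Q"
begin

lemma measurable_birkhoff_sum [measurable]:
  "g \<in> borel_measurable Q \<Longrightarrow> birkhoff_sum T g n \<in> borel_measurable Q"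
  by (rule borel_measurable_birkhoff_sum[OF measurable_T])

lemma integrable_comp_T:
  fixes g :: "'a \<Rightarrow> real"
  assumes "integrable Q g"
  shows "integrable Q (\<lambda>x. g (T x))"
proof -
  have [measurable]: "g \<in> borel_measurable Q"
    using assms by auto
  show ?thesis
    using assms integrable_distr_eq[of T Q Q g] by (simp add: distr_T)
qed

lemma integral_comp_T:
  fixes g :: "'a \<Rightarrow> real"
  assumes "integrable Q g"
  shows "(\<integral>x. g (T x) \<partial>Q) = integral\<^sup>L Q g"
proof -
  have [measurable]: "g \<in> borel_measurable Q"
    using assms by auto
  show ?thesis
    using integral_distr[of T Q Q g] by (simp add: distr_T)
qed

lemma integrable_birkhoff_sum:
  assumes "integrable Q g"
  shows "integrable Q (birkhoff_sum T g n)"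
proof (induction n)
  case (Suc n)
  then show ?case
    using assms integrable_comp_T[OF Suc] by (simp add: birkhoff_sum_Suc[abs_def])
qed (simp add: birkhoff_sum_def[abs_def])

lemma integrable_Max_birkhoff_sum:
  assumes g: "integrable Q g"
  shows "integrable Q (\<lambda>x. Max ((\<lambda>k. birkhoff_sum T g k x) ` {..N}))"
proof (rule Bochner_Integration.integrable_bound)
  show "integrable Q (\<lambda>x. \<Sum>k\<le>N. \<bar>birkhoff_sum T g k x\<bar>)"
    using integrable_birkhoff_sum[OF g] by auto
  have "\<bar>Max ((\<lambda>k. birkhoff_sum T g k x) ` {..N})\<bar> \<le> (\<Sum>k\<le>N. \<bar>birkhoff_sum T g k x\<bar>)" for x
  proof -
    obtain k where "k \<le> N" and "Max ((\<lambda>k. birkhoff_sum T g k x) ` {..N}) = birkhoff_sum T g k x"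
      using Max_in[of "(\<lambda>k. birkhoff_sum T g k x) ` {..N}"] by fastforce
    then show ?thesis
      by (auto intro: member_le_sum)
  qed
  then show "AE x in Q. norm (Max ((\<lambda>k. birkhoff_sum T g k x) ` {..N})) \<le> norm (\<Sum>k\<le>N. \<bar>birkhoff_sum T g k x\<bar>)"
    by (auto intro: order_trans)
qed (use g in auto)

text \<open>The pointwise inequality \<open>m \<le> I g + m \<circ> T\<close> for the running maximum \<open>m\<close> of the Birkhoff
  sums integrates, by invariance of \<open>Q\<close>, to \<open>0 \<le> \<integral> I g\<close>.\<close>

lemma maximal_ergodic_finite:
  assumes g: "integrable Q g"
  shows "0 \<le> (\<integral>x. indicator {x. 0 < Max ((\<lambda>k. birkhoff_sum T g k x) ` {..N})} x * g x \<partial>Q)"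
proof -
  define m where "m x = Max ((\<lambda>k. birkhoff_sum T g k x) ` {..N})" for x
  define I :: "'a \<Rightarrow> real" where "I x = indicator {x. 0 < m x} x" for x
  have "integrable Q m"
    unfolding m_def by (rule integrable_Max_birkhoff_sum[OF g])
  have m_nonneg: "0 \<le> m x" for x
    unfolding m_def by (rule Max_ge_iff[THEN iffD2]) (auto intro!: bexI[of _ 0])
  have [measurable]: "g \<in> borel_measurable Q"
    using g by auto
  have Ig: "integrable Q (\<lambda>x. I x * g x)"
    by (rule Bochner_Integration.integrable_bound[OF g]) (auto simp: I_def m_def indicator_def)
  have "m x \<le> I x * g x + m (T x)" for x
    using Max_birkhoff_sum_le[of T g x N] m_nonneg[of x] m_nonneg[of "T x"]
    by (cases "0 < m x") (auto simp: m_def I_def)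
  then have "integral\<^sup>L Q m \<le> (\<integral>x. I x * g x + m (T x) \<partial>Q)"
    using Ig integrable_comp_T[OF \<open>integrable Q m\<close>] \<open>integrable Q m\<close>
    by (intro integral_mono) auto
  also have "\<dots> = (\<integral>x. I x * g x \<partial>Q) + integral\<^sup>L Q m"
    using Ig integrable_comp_T[OF \<open>integrable Q m\<close>] integral_comp_T[OF \<open>integrable Q m\<close>] by simp
  finally show ?thesis
    unfolding I_def m_def by simp
qed

lemma maximal_ergodic:
  assumes g: "integrable Q g" and pos: "AE x in Q. \<exists>n. 0 < birkhoff_sum T g n x"
  shows "0 \<le> integral\<^sup>L Q g"
proof -
  define s where "s N x = indicator {x. 0 < Max ((\<lambda>k. birkhoff_sum T g k x) ` {..N})} x * g x" for N x
  have [measurable]: "g \<in> borel_measurable Q"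
    using g by auto
  have s_measurable: "s N \<in> borel_measurable Q" for N
    unfolding s_def by measurable
  have "(\<lambda>N. integral\<^sup>L Q (s N)) \<longlonglongrightarrow> integral\<^sup>L Q g"
  proof (rule integral_dominated_convergence[where w = "\<lambda>x. \<bar>g x\<bar>"])
    show "AE x in Q. norm (s N x) \<le> \<bar>g x\<bar>" for N
      by (auto simp: s_def indicator_def)
    show "AE x in Q. (\<lambda>N. s N x) \<longlonglongrightarrow> g x"
      using pos
    proof eventually_elim
      case (elim x)
      then obtain n where n: "0 < birkhoff_sum T g n x"
        by blast
      have "s N x = g x" if "n \<le> N" for N
      proof -
        have "birkhoff_sum T g n x \<le> Max ((\<lambda>k. birkhoff_sum T g k x) ` {..N})"
          using that by (intro Max_ge) auto
        then show ?thesis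
          using n by (simp add: s_def)
      qed
      then show ?case
        by (intro tendsto_eventually eventually_sequentiallyI)
    qed
  qed (use g s_measurable in auto)
  moreover have "0 \<le> integral\<^sup>L Q (s N)" for N
    unfolding s_def by (rule maximal_ergodic_finite[OF g])
  ultimately show ?thesis
    by (intro LIMSEQ_le_const) auto
qed

end

locale ergodic_mpt = mpt +
  assumes ergodic: "A \<in> sets Q \<Longrightarrow> T -` A \<inter> space Q = A \<Longrightarrow> prob A = 0 \<or> prob A = 1"
begin

lemma AE_bdd_above_birkhoff_sum:
  assumes g: "integrable Q g" and neg: "integral\<^sup>L Q g < 0"
  shows "AE x in Q. bdd_above (range (\<lambda>n. birkhoff_sum T g n x))"
proof -
  define U where "U = {x \<in> space Q. \<not> bdd_above (range (\<lambda>n. birkhoff_sum T g n x))}"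
  have [measurable]: "g \<in> borel_measurable Q"
    using g by auto
  have U: "U \<in> sets Q"
    unfolding U_def bdd_above_range_iff_nat by measurable
  have "bdd_above (range (\<lambda>n. birkhoff_sum T g n x)) \<longleftrightarrow> bdd_above (range (\<lambda>n. birkhoff_sum T g n (T x)))"
    for x by (rule bdd_above_range_shift_iff) (rule birkhoff_sum_Suc)
  then have "T -` U \<inter> space Q = U"
    by (auto simp: U_def measurable_space[OF measurable_T])
  moreover have "prob U \<noteq> 1"
  proof
    assume "prob U = 1"
    then have "AE x in Q. x \<in> U"
      using U by (simp add: prob_eq_1)
    then have "AE x in Q. \<exists>n. 0 < birkhoff_sum T g n x"
      by eventually_elim (auto simp: U_def bdd_above_def not_le)
    with maximal_ergodic[OF g] neg show False
      by simp
  qed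
  ultimately have "prob U = 0"
    using ergodic[OF U] by blast
  then have "AE x in Q. x \<notin> U"
    using U by (simp add: prob_eq_0)
  with AE_space show ?thesis
    by eventually_elim (auto simp: U_def)
qed

theorem birkhoff_ergodic:
  assumes f: "integrable Q f"
  shows "AE x in Q. (\<lambda>n. birkhoff_sum T f n x / real n) \<longlonglongrightarrow> integral\<^sup>L Q f"
proof -
  define c where "c = integral\<^sup>L Q f"
  have "AE x in Q. bdd_above (range (\<lambda>n. birkhoff_sum T (\<lambda>x. f x - (c + 1 / real (Suc k))) n x))" for k
    using f by (intro AE_bdd_above_birkhoff_sum) (auto simp: c_def prob_space)
  then have upper: "AE x in Q. \<forall>k. bdd_above (range (\<lambda>n. birkhoff_sum T f n x - real n * (c + 1 / real (Suc k))))"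
    by (simp add: AE_all_countable birkhoff_sum_diff_const)
  have "AE x in Q. bdd_above (range (\<lambda>n. birkhoff_sum T (\<lambda>x. (c - 1 / real (Suc k)) - f x) n x))" for k
    using f by (intro AE_bdd_above_birkhoff_sum) (auto simp: c_def prob_space)
  then have lower: "AE x in Q. \<forall>k. bdd_above (range (\<lambda>n. real n * (c - 1 / real (Suc k)) - birkhoff_sum T f n x))"
    by (simp add: AE_all_countable birkhoff_sum_const_diff)
  from upper lower show ?thesis
    unfolding c_def[symmetric]
  proof eventually_elim
    case (elim x)
    show ?case
      using elim by (intro LIMSEQ_average_if_bdd_above) auto
  qed
qed

end

section \<open>Capacities and upper probabilities\<close>

lemma
  assumes "capacity M V"
  shows capacity_nonneg: "A \<in> sets M \<Longrightarrow> 0 \<le> V A"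
    and capacity_le_1: "A \<in> sets M \<Longrightarrow> V A \<le> 1"
    and capacity_mono: "A \<in> sets M \<Longrightarrow> B \<in> sets M \<Longrightarrow> A \<subseteq> B \<Longrightarrow> V A \<le> V B"
    and capacity_space: "V (space M) = 1"
  using assms unfolding capacity_def by auto

lemma upper_probability_capacity: "upper_probability M V \<Longrightarrow> capacity M V"
  unfolding upper_probability_def by blast

lemma upper_probability_attained:
  assumes "upper_probability M V" and "A \<in> sets M"
  obtains P where "prob_space P" and "sets P = sets M" and "\<And>B. B \<in> sets M \<Longrightarrow> measure P B \<le> V B"
    and "measure P A = V A"
proof -
  from assms obtain \<Lambda> where "\<forall>P\<in>\<Lambda>. prob_space P \<and> sets P = sets M"
    and "\<forall>B\<in>sets M. \<forall>P\<in>\<Lambda>. measure P B \<le> V B" and "\<exists>P\<in>\<Lambda>. measure P A = V A"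
    unfolding upper_probability_def by blast
  then show ?thesis
    using that by blast
qed

lemma upper_probability_dominated:
  assumes "upper_probability M V"
  obtains P where "prob_space P" and "sets P = sets M" and "\<And>B. B \<in> sets M \<Longrightarrow> measure P B \<le> V B"
  using upper_probability_attained[OF assms sets.top] by metis

lemma upper_probability_subadditive:
  assumes "upper_probability M V" and A: "A \<in> sets M" and B: "B \<in> sets M"
  shows "V (A \<union> B) \<le> V A + V B"
proof -
  obtain P where "prob_space P" and sets: "sets P = sets M" and le: "\<And>C. C \<in> sets M \<Longrightarrow> measure P C \<le> V C"
    and eq: "measure P (A \<union> B) = V (A \<union> B)"
    using upper_probability_attained[OF assms(1) sets.Un[OF A B]] by metis
  interpret P: prob_space P
    by fact
  have "V (A \<union> B) \<le> measure P A + measure P B"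
    using measure_Un_le[of A P B] eq A B sets by simp
  also have "\<dots> \<le> V A + V B"
    using le[OF A] le[OF B] by simp
  finally show ?thesis .
qed

lemma upper_probability_compl:
  assumes "upper_probability M V" and A: "A \<in> sets M"
  shows "1 \<le> V A + V (space M - A)"
proof -
  obtain P where "prob_space P" and sets: "sets P = sets M" and le: "\<And>C. C \<in> sets M \<Longrightarrow> measure P C \<le> V C"
    using upper_probability_dominated[OF assms(1)] by metis
  interpret P: prob_space P
    by fact
  have "space P = space M"
    using sets by (rule sets_eq_imp_space_eq)
  then have "1 = measure P A + measure P (space M - A)"
    using A sets P.prob_compl[of A] by simp
  also have "\<dots> \<le> V A + V (space M - A)"
    using le[of A] le[of "space M - A"] A by (intro add_mono) auto
  finally show ?thesis .
qed

lemma compact_probs_decseq_uniformly_small: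
  assumes compact: "compact (setwise_repr M ` \<Lambda>)"
    and prob: "\<And>P. P \<in> \<Lambda> \<Longrightarrow> prob_space P" and sets: "\<And>P. P \<in> \<Lambda> \<Longrightarrow> sets P = sets M"
    and A: "range A \<subseteq> sets M" "decseq A" "(\<Inter>i. A i) = {}" and "0 < r"
  obtains N where "\<And>P n. P \<in> \<Lambda> \<Longrightarrow> N \<le> n \<Longrightarrow> measure P (A n) < r"
proof -
  have antimono: "measure P (A m) \<le> measure P (A k)" if "P \<in> \<Lambda>" "k \<le> m" for P k m
  proof -
    interpret P: prob_space P
      using prob[OF \<open>P \<in> \<Lambda>\<close>] .
    show ?thesis
      using sets[OF \<open>P \<in> \<Lambda>\<close>] A that by (intro P.finite_measure_mono) (auto simp: decseq_def)
  qed
  have repr: "setwise_repr M P (A n) = measure P (A n)" for P n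
    using A(1) by (auto simp: setwise_repr_def)
  have cover: "setwise_repr M ` \<Lambda> \<subseteq> (\<Union>n. {q. q (A n) < r})"
  proof safe
    fix P
    assume "P \<in> \<Lambda>"
    interpret P: prob_space P
      using prob[OF \<open>P \<in> \<Lambda>\<close>] .
    have "(\<lambda>i. measure P (A i)) \<longlonglongrightarrow> measure P (\<Inter>i. A i)"
      using sets[OF \<open>P \<in> \<Lambda>\<close>] A by (intro P.finite_Lim_measure_decseq) auto
    then have "eventually (\<lambda>i. measure P (A i) < r) sequentially"
      using A(3) \<open>0 < r\<close> by (auto intro: order_tendstoD)
    then obtain n where "measure P (A n) < r"
      by (auto simp: eventually_sequentially)
    then show "setwise_repr M P \<in> (\<Union>n. {q. q (A n) < r})"
      by (auto simp: repr)
  qed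
  have "open {q :: 'a set \<Rightarrow> real. q (A n) < r}" for n
    by (rule open_Collect_less) (auto intro: continuous_on_product_coordinates)
  then obtain C where "C \<subseteq> UNIV" and "finite C" and C: "setwise_repr M ` \<Lambda> \<subseteq> (\<Union>n\<in>C. {q. q (A n) < r})"
    by (rule compactE_image[OF compact _ cover])
  have "measure P (A n) < r" if "P \<in> \<Lambda>" and "Max (insert 0 C) \<le> n" for P n
  proof -
    obtain k where "k \<in> C" and "measure P (A k) < r"
      using C \<open>P \<in> \<Lambda>\<close> by (auto simp: repr)
    moreover have "k \<le> n"
      using \<open>k \<in> C\<close> \<open>finite C\<close> \<open>Max (insert 0 C) \<le> n\<close> by (meson Max_ge finite_insert insertCI order_trans)
    ultimately show ?thesis
      using antimono[OF \<open>P \<in> \<Lambda>\<close>] by (meson order.strict_trans1)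
  qed
  then show ?thesis
    using that by blast
qed

lemma upper_probability_continuous_empty:
  assumes "upper_probability M V" and A: "range A \<subseteq> sets M" "decseq A" "(\<Inter>i. A i) = {}"
  shows "(\<lambda>i. V (A i)) \<longlonglongrightarrow> 0"
proof (rule LIMSEQ_I)
  fix r :: real
  assume "0 < r"
  from assms(1) obtain \<Lambda> where "\<Lambda> \<noteq> {}" and priors: "\<forall>P\<in>\<Lambda>. prob_space P \<and> sets P = sets M"
    and compact: "compact (setwise_repr M ` \<Lambda>)"
    and envelope: "\<forall>B\<in>sets M. (\<forall>P\<in>\<Lambda>. measure P B \<le> V B) \<and> (\<exists>P\<in>\<Lambda>. measure P B = V B)"
    unfolding upper_probability_def by (elim conjE exE) (rule that)
  obtain N where small: "\<And>P n. P \<in> \<Lambda> \<Longrightarrow> N \<le> n \<Longrightarrow> measure P (A n) < r"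
    using compact_probs_decseq_uniformly_small[OF compact _ _ A \<open>0 < r\<close>] priors by metis
  show "\<exists>N. \<forall>n\<ge>N. norm (V (A n) - 0) < r"
  proof (intro exI allI impI)
    fix n
    assume "N \<le> n"
    obtain P where "P \<in> \<Lambda>" and "measure P (A n) = V (A n)"
      using envelope A(1) by blast
    moreover have "0 \<le> V (A n)"
      using A(1) upper_probability_capacity[OF assms(1)] by (auto intro: capacity_nonneg)
    ultimately show "norm (V (A n) - 0) < r"
      using small[OF _ \<open>N \<le> n\<close>] by force
  qed
qed

lemma cap_ae_conj:
  assumes "upper_probability M V" and "cap_ae M V P" and "cap_ae M V R"
  shows "cap_ae M V (\<lambda>x. P x \<and> R x)"
proof -
  obtain A B where A: "A \<in> sets M" "V (space M - A) = 0" "\<And>x. x \<in> A \<Longrightarrow> P x"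
    and B: "B \<in> sets M" "V (space M - B) = 0" "\<And>x. x \<in> B \<Longrightarrow> R x"
    using assms(2,3) unfolding cap_ae_def by metis
  have "V (space M - (A \<inter> B)) \<le> V (space M - A) + V (space M - B)"
    using upper_probability_subadditive[OF assms(1), of "space M - A" "space M - B"] A B
    by (simp add: Diff_Int)
  moreover have "0 \<le> V (space M - (A \<inter> B))"
    using A B upper_probability_capacity[OF assms(1)] by (auto intro: capacity_nonneg)
  ultimately show ?thesis
    unfolding cap_ae_def using A B by (intro bexI[of _ "A \<inter> B"]) auto
qed

lemma cap_ae_imp_ex:
  assumes "capacity M V" and "cap_ae M V P"
  shows "\<exists>x\<in>space M. P x"
proof -
  obtain A where "A \<in> sets M" "V (space M - A) = 0" "\<And>x. x \<in> A \<Longrightarrow> P x"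
    using assms(2) unfolding cap_ae_def by metis
  moreover have "A \<noteq> {}"
    using \<open>V (space M - A) = 0\<close> capacity_space[OF assms(1)] by auto
  ultimately show ?thesis
    using sets.sets_into_space by blast
qed

section \<open>An invariant probability in the core\<close>

lemma compact_core_vanishing_outside:
  "compact (core M V \<inter> {p. \<forall>A. A \<notin> sets M \<longrightarrow> p A = 0})" (is "compact ?K")
proof -
  have "?K = PiE UNIV (\<lambda>_. {0..1}) \<inter> ?K"
    unfolding core_def by (auto simp: PiE_iff)
  also have "compact \<dots>"
  proof (rule compact_Int_closed)
    show "compact (PiE UNIV (\<lambda>_::'a set. {0..1::real}))"
      using compactin_PiE[of "\<lambda>_. euclidean" UNIV "\<lambda>_::'a set. {0..1::real}"]
      by (simp add: euclidean_product_topology)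
    show "closed ?K"
      unfolding core_def Ball_def
      by (intro closed_Int closed_Collect_conj closed_Collect_all closed_Collect_imp open_Collect_const
          closed_Collect_eq closed_Collect_le continuous_intros continuous_on_product_coordinates)
  qed
  finally show ?thesis .
qed

lemma average_measures_in_core:
  assumes "\<And>i. prob_space (\<nu> i)" and sets: "\<And>i. sets (\<nu> i) = sets M"
    and le: "\<And>i A. A \<in> sets M \<Longrightarrow> measure (\<nu> i) A \<le> V A"
  shows "(\<lambda>A. (\<Sum>i<Suc n. measure (\<nu> i) A) / real (Suc n)) \<in> core M V \<inter> {p. \<forall>A. A \<notin> sets M \<longrightarrow> p A = 0}"
    (is "?p \<in> _")
proof -
  interpret prob_space "\<nu> i" for i
    by fact
  have pos: "0 < real (Suc n)"
    by simp
  have "?p A \<le> 1" for A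
    using sum_mono[of "{..<Suc n}" "\<lambda>i. measure (\<nu> i) A" "\<lambda>_. 1"] pos
    by (simp add: pos_divide_le_eq del: of_nat_Suc)
  moreover have "?p A \<le> V A" if "A \<in> sets M" for A
    using sum_mono[of "{..<Suc n}" "\<lambda>i. measure (\<nu> i) A" "\<lambda>_. V A"] le[OF that] pos
    by (simp add: pos_divide_le_eq mult.commute del: of_nat_Suc)
  moreover have "?p (space M) = 1"
    using prob_space sets_eq_imp_space_eq[OF sets] pos by simp
  moreover have "?p (A \<union> B) = ?p A + ?p B" if "A \<in> sets M" "B \<in> sets M" "A \<inter> B = {}" for A B
    using that sets by (simp add: finite_measure_Union sum.distrib add_divide_distrib)
  moreover have "?p A = 0" if "A \<notin> sets M" for A
    using that sets by (simp add: measure_notin_sets)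
  ultimately show ?thesis
    unfolding core_def by (simp add: sum_nonneg)
qed

lemma compact_approx_invariant_imp_invariant:
  fixes K :: "('b \<Rightarrow> real) set" and S :: "'b \<Rightarrow> 'b"
  assumes "compact K" and approx: "\<And>n. \<exists>q\<in>K. \<forall>b\<in>B. \<bar>q (S b) - q b\<bar> \<le> 1 / real (Suc n)"
  obtains p where "p \<in> K" and "\<And>b. b \<in> B \<Longrightarrow> p (S b) = p b"
proof -
  define F where "F n = (\<Inter>b\<in>B. {q. \<bar>q (S b) - q b\<bar> \<le> 1 / real (Suc n)})" for n
  have "closed (F n)" for n
    unfolding F_def
    by (intro closed_INT ballI closed_Collect_le continuous_intros continuous_on_product_coordinates)
  moreover have "K \<inter> (\<Inter>i\<in>I. F i) \<noteq> {}" if "finite I" for I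
  proof -
    define N where "N = Max (insert 0 I)"
    obtain q where "q \<in> K" and "q \<in> F N"
      using approx[of N] unfolding F_def by blast
    moreover have "F N \<subseteq> F i" if "i \<in> I" for i
    proof -
      have "i \<le> N"
        using \<open>finite I\<close> \<open>i \<in> I\<close> unfolding N_def by simp
      then have "1 / real (Suc N) \<le> 1 / real (Suc i)"
        by (simp add: frac_le)
      then show ?thesis
        unfolding F_def by (auto intro: order_trans)
    qed
    ultimately have "q \<in> K \<inter> (\<Inter>i\<in>I. F i)"
      by blast
    then show ?thesis
      by blast
  qed
  ultimately have "K \<inter> (\<Inter>n\<in>UNIV. F n) \<noteq> {}"
    by (rule compact_imp_fip_image[OF \<open>compact K\<close>]) blast+
  then obtain p where "p \<in> K" and "\<And>n. p \<in> F n"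
    by blast
  then have p: "\<bar>p (S b) - p b\<bar> \<le> 1 / real (Suc n)" if "b \<in> B" for n b
    using that unfolding F_def by blast
  have "p (S b) = p b" if "b \<in> B" for b
  proof (rule ccontr)
    assume "p (S b) \<noteq> p b"
    then obtain n where "inverse (real (Suc n)) < \<bar>p (S b) - p b\<bar>"
      using reals_Archimedean[of "\<bar>p (S b) - p b\<bar>"] by auto
    with p[OF that, of n] show False
      by (simp add: inverse_eq_divide)
  qed
  with \<open>p \<in> K\<close> show ?thesis
    using that by blast
qed

lemma T_invariant_cap_funpow:
  assumes T: "T \<in> measurable M M" and inv: "T_invariant_cap M T V" and A: "A \<in> sets M"
  shows "V ((T ^^ n) -` A \<inter> space M) = V A"
proof (induction n)
  case 0
  then show ?case
    using sets.sets_into_space[OF A] by (simp add: Int_absorb2)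
next
  case (Suc n)
  let ?C = "(T ^^ n) -` A \<inter> space M"
  have eq: "(T ^^ Suc n) -` A \<inter> space M = T -` ?C \<inter> space M"
    using measurable_space[OF T] by (auto simp: funpow_Suc_right simp del: funpow.simps)
  have "?C \<in> sets M"
    using measurable_sets[OF measurable_funpow[OF T] A] .
  then have "V (T -` ?C \<inter> space M) = V ?C"
    using inv unfolding T_invariant_cap_def by blast
  then show ?case
    unfolding eq using Suc.IH by (simp only:)
qed

lemma measurable_funpow_sets_eq:
  assumes "T \<in> measurable M M" and "sets P = sets M"
  shows "T ^^ i \<in> measurable P M"
  by (subst measurable_cong_sets[OF assms(2) refl]) (rule measurable_funpow[OF assms(1)])

lemma measure_distr_funpow:
  assumes T: "T \<in> measurable M M" and sets_P: "sets P = sets M" and A: "A \<in> sets M"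
  shows "measure (distr P M (T ^^ i)) A = measure P ((T ^^ i) -` A \<inter> space M)"
  using measure_distr[OF measurable_funpow_sets_eq[OF T sets_P] A] sets_eq_imp_space_eq[OF sets_P]
  by simp

lemma measure_distr_funpow_vimage:
  assumes T: "T \<in> measurable M M" and sets_P: "sets P = sets M" and A: "A \<in> sets M"
  shows "measure (distr P M (T ^^ i)) (T -` A \<inter> space M) = measure (distr P M (T ^^ Suc i)) A"
proof -
  have "(T ^^ i) -` (T -` A \<inter> space M) \<inter> space M = (T ^^ Suc i) -` A \<inter> space M"
    using measurable_space[OF measurable_funpow[OF T]] by auto
  then show ?thesis
    using measure_distr_funpow[OF T sets_P A, of "Suc i"]
      measure_distr_funpow[OF T sets_P measurable_sets[OF T A], of i] by simp
qed

lemma average_measures_shift_bound: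
  assumes "\<And>i. prob_space (\<nu> i)" and shift: "\<And>i. measure (\<nu> i) B = measure (\<nu> (Suc i)) A"
  shows "\<bar>(\<Sum>i<Suc n. measure (\<nu> i) B) / real (Suc n) - (\<Sum>i<Suc n. measure (\<nu> i) A) / real (Suc n)\<bar>
    \<le> 1 / real (Suc n)"
proof -
  have "(\<Sum>i<Suc n. measure (\<nu> i) B) - (\<Sum>i<Suc n. measure (\<nu> i) A)
      = measure (\<nu> (Suc n)) A - measure (\<nu> 0) A"
    using sum_lessThan_telescope[of "\<lambda>i. measure (\<nu> i) A" "Suc n"]
    by (simp add: shift sum_subtractf del: sum.lessThan_Suc)
  moreover have "\<bar>measure (\<nu> (Suc n)) A - measure (\<nu> 0) A\<bar> \<le> 1"
    using assms(1) by (smt (verit) measure_nonneg prob_space.prob_le_1)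
  ultimately show ?thesis
    by (simp add: diff_divide_distrib[symmetric] divide_right_mono del: of_nat_Suc)
qed

text \<open>Krylov--Bogolyubov: the Cesaro averages of the push-forwards of a dominated prior along
  the orbit of \<open>T\<close> lie in the core and are almost invariant.\<close>

lemma exists_invariant_core_element:
  assumes T: "T \<in> measurable M M" and up: "upper_probability M V" and inv: "T_invariant_cap M T V"
  obtains p where "p \<in> core M V" and "\<forall>A. A \<notin> sets M \<longrightarrow> p A = 0"
    and "\<And>A. A \<in> sets M \<Longrightarrow> p (T -` A \<inter> space M) = p A"
proof -
  obtain P where P: "prob_space P" and sets_P: "sets P = sets M"
    and le: "\<And>B. B \<in> sets M \<Longrightarrow> measure P B \<le> V B"
    using upper_probability_dominated[OF up] by metis
  define \<nu> where "\<nu> i = distr P M (T ^^ i)" for i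
  have prob: "prob_space (\<nu> i)" for i
    unfolding \<nu>_def using P measurable_funpow_sets_eq[OF T sets_P]
    by (rule prob_space.prob_space_distr)
  moreover have "sets (\<nu> i) = sets M" for i
    by (simp add: \<nu>_def)
  moreover have "measure (\<nu> i) A \<le> V A" if "A \<in> sets M" for i A
    using le[OF measurable_sets[OF measurable_funpow[OF T] that]] measure_distr_funpow[OF T sets_P that]
      T_invariant_cap_funpow[OF T inv that] by (simp add: \<nu>_def)
  ultimately have "(\<lambda>A. (\<Sum>i<Suc n. measure (\<nu> i) A) / real (Suc n)) \<in> core M V \<inter> {p. \<forall>A. A \<notin> sets M \<longrightarrow> p A = 0}"
    for n by (rule average_measures_in_core)
  moreover have "\<bar>(\<Sum>i<Suc n. measure (\<nu> i) (T -` A \<inter> space M)) / real (Suc n)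
      - (\<Sum>i<Suc n. measure (\<nu> i) A) / real (Suc n)\<bar> \<le> 1 / real (Suc n)" if "A \<in> sets M" for n A
    using prob measure_distr_funpow_vimage[OF T sets_P that] unfolding \<nu>_def
    by (rule average_measures_shift_bound)
  ultimately have "\<exists>q\<in>core M V \<inter> {p. \<forall>A. A \<notin> sets M \<longrightarrow> p A = 0}.
      \<forall>A\<in>sets M. \<bar>q (T -` A \<inter> space M) - q A\<bar> \<le> 1 / real (Suc n)" for n
    by (intro bexI ballI) auto
  then obtain p where "p \<in> core M V \<inter> {p. \<forall>A. A \<notin> sets M \<longrightarrow> p A = 0}"
    and "\<And>A. A \<in> sets M \<Longrightarrow> p (T -` A \<inter> space M) = p A"
    by (rule compact_approx_invariant_imp_invariant[where S = "\<lambda>A. T -` A \<inter> space M",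
          OF compact_core_vanishing_outside]) blast
  then show ?thesis
    using that by blast
qed

lemma core_element_is_measure:
  assumes up: "upper_probability M V" and p: "p \<in> core M V" and p0: "\<forall>A. A \<notin> sets M \<longrightarrow> p A = 0"
  obtains Q where "prob_space Q" and "sets Q = sets M" and "measure Q = p"
proof -
  have nonneg: "\<And>A. A \<in> sets M \<Longrightarrow> 0 \<le> p A" and le: "\<And>A. A \<in> sets M \<Longrightarrow> p A \<le> V A"
    and space: "p (space M) = 1"
    and add: "\<And>A B. A \<in> sets M \<Longrightarrow> B \<in> sets M \<Longrightarrow> A \<inter> B = {} \<Longrightarrow> p (A \<union> B) = p A + p B"
    using p unfolding core_def by auto
  define \<mu> where "\<mu> A = ennreal (p A)" for A
  have positive: "positive (sets M) \<mu>"
    using add[of "{}" "{}"] by (simp add: positive_def \<mu>_def)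
  have "countably_additive (sets M) \<mu>"
  proof (rule sets.empty_continuous_imp_countably_additive[OF positive])
    show "additive (sets M) \<mu>"
      using add nonneg by (simp add: additive_def \<mu>_def ennreal_plus)
    show "\<forall>A\<in>sets M. \<mu> A \<noteq> \<infinity>"
      by (simp add: \<mu>_def)
    fix A :: "nat \<Rightarrow> 'a set"
    assume A: "range A \<subseteq> sets M" "decseq A" "(\<Inter>i. A i) = {}"
    have "(\<lambda>i. p (A i)) \<longlonglongrightarrow> 0"
    proof (rule real_tendsto_sandwich[where f = "\<lambda>_. 0" and h = "\<lambda>i. V (A i)"])
      show "eventually (\<lambda>i. 0 \<le> p (A i)) sequentially" "eventually (\<lambda>i. p (A i) \<le> V (A i)) sequentially"
        using A(1) nonneg le by (auto intro!: always_eventually)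
      show "(\<lambda>i. V (A i)) \<longlonglongrightarrow> 0"
        by (rule upper_probability_continuous_empty[OF up A])
    qed simp
    then show "(\<lambda>i. \<mu> (A i)) \<longlonglongrightarrow> 0"
      unfolding \<mu>_def by (simp add: tendsto_ennrealI[where x = 0, simplified])
  qed
  define Q where "Q = measure_of (space M) (sets M) \<mu>"
  have sets_Q: "sets Q = sets M" and space_Q: "space Q = space M"
    by (simp_all add: Q_def)
  have emeasure_Q: "emeasure Q A = ennreal (p A)" if "A \<in> sets M" for A
    unfolding Q_def using emeasure_measure_of_sigma[OF sets.sigma_algebra_axioms positive \<open>countably_additive _ \<mu>\<close> that]
    by (simp add: \<mu>_def)
  have "measure Q A = p A" for A
  proof (cases "A \<in> sets M")
    case True
    then show ?thesis
      using emeasure_Q nonneg by (simp add: measure_def)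
  next
    case False
    then show ?thesis
      using p0 sets_Q by (simp add: measure_notin_sets)
  qed
  moreover have "prob_space Q"
    by (rule prob_spaceI) (simp add: space_Q emeasure_Q space)
  ultimately show ?thesis
    using that sets_Q by blast
qed

lemma exists_invariant_prob_in_core:
  assumes "T \<in> measurable M M" and "upper_probability M V" and "T_invariant_cap M T V"
  obtains Q where "prob_space Q" and "sets Q = sets M" and "measure Q \<in> core M V"
    and "\<And>A. A \<in> sets M \<Longrightarrow> measure Q (T -` A \<inter> space M) = measure Q A"
proof -
  obtain p where "p \<in> core M V" and "\<forall>A. A \<notin> sets M \<longrightarrow> p A = 0"
    and "\<And>A. A \<in> sets M \<Longrightarrow> p (T -` A \<inter> space M) = p A"
    using exists_invariant_core_element[OF assms] by metis
  moreover obtain Q where "prob_space Q" and "sets Q = sets M" and "measure Q = p"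
    using core_element_is_measure[OF assms(2) calculation(1,2)] by metis
  ultimately show ?thesis
    using that by blast
qed

section \<open>Ergodicity of the upper probability\<close>

lemma sets_Collect_LIMSEQ:
  fixes u :: "nat \<Rightarrow> 'a \<Rightarrow> real"
  assumes [measurable]: "\<And>n. u n \<in> borel_measurable M"
  shows "{x \<in> space M. (\<lambda>n. u n x) \<longlonglongrightarrow> c} \<in> sets M"
proof -
  have "(\<lambda>n. u n x) \<longlonglongrightarrow> c \<longleftrightarrow> Cauchy (\<lambda>n. u n x) \<and> lim (\<lambda>n. u n x) = c" for x
    by (metis Cauchy_convergent_iff LIMSEQ_imp_Cauchy convergent_LIMSEQ_iff limI)
  then show ?thesis
    by simp
qed

definition birkhoff_limit :: "'a measure \<Rightarrow> ('a \<Rightarrow> 'a) \<Rightarrow> ('a set \<Rightarrow> real) \<Rightarrow> 'a measure \<Rightarrow> bool" where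
  "birkhoff_limit M T V Q \<longleftrightarrow> (\<forall>f::'a \<Rightarrow> real. integrable Q f \<longrightarrow>
     cap_ae M V (\<lambda>\<omega>. (\<lambda>n. birkhoff_sum T f n \<omega> / real n) \<longlonglongrightarrow> integral\<^sup>L Q f))"

lemma ergodic_cap_imp_ergodic_probs:
  assumes erg: "ergodic_cap M T V" and "prob_space Q" and sets_Q: "sets Q = sets M"
    and core: "measure Q \<in> core M V"
    and inv: "\<And>A. A \<in> sets M \<Longrightarrow> measure Q (T -` A \<inter> space M) = measure Q A"
  shows "Q \<in> ergodic_probs M T"
proof -
  interpret prob_space Q
    by fact
  have le: "measure Q C \<le> V C" if "C \<in> sets M" for C
    using core that by (simp add: core_def)
  have "measure Q B = 0 \<or> measure Q B = 1" if B: "B \<in> inv_sets M T" for B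
  proof -
    have "B \<in> sets M"
      using B by (simp add: inv_sets_def)
    from erg B have "V B = 0 \<or> V (space M - B) = 0"
      unfolding ergodic_cap_def by blast
    then show ?thesis
    proof
      assume "V B = 0"
      then show ?thesis
        using le[OF \<open>B \<in> sets M\<close>] measure_nonneg[of Q B] by simp
    next
      assume "V (space M - B) = 0"
      then have "measure Q (space M - B) = 0"
        using le[of "space M - B"] \<open>B \<in> sets M\<close> measure_nonneg[of Q "space M - B"] by auto
      then show ?thesis
        using prob_compl[of B] \<open>B \<in> sets M\<close> sets_Q sets_eq_imp_space_eq[OF sets_Q] by simp
    qed
  qed
  then show ?thesis
    using sets_Q inv prob_space_axioms unfolding ergodic_probs_def by blast
qed

lemma ergodic_probs_imp_ergodic_mpt:
  assumes T: "T \<in> measurable M M" and "Q \<in> ergodic_probs M T"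
  shows "ergodic_mpt Q T"
proof -
  have "prob_space Q" and sets_Q: "sets Q = sets M"
    and inv: "\<And>A. A \<in> sets M \<Longrightarrow> measure Q (T -` A \<inter> space M) = measure Q A"
    and erg: "\<And>A. A \<in> inv_sets M T \<Longrightarrow> measure Q A = 0 \<or> measure Q A = 1"
    using assms(2) unfolding ergodic_probs_def by auto
  interpret prob_space Q
    by fact
  have space_Q: "space Q = space M"
    using sets_Q by (rule sets_eq_imp_space_eq)
  have T_Q: "T \<in> measurable Q Q"
    using T by (simp add: measurable_cong_sets[OF sets_Q sets_Q])
  have "distr Q Q T = Q"
  proof (rule measure_eqI)
    fix A
    assume "A \<in> sets (distr Q Q T)"
    then have "A \<in> sets M"
      by (simp add: sets_Q)
    then show "emeasure (distr Q Q T) A = emeasure Q A"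
      using inv[of A] measurable_sets[OF T \<open>A \<in> sets M\<close>]
      by (simp add: emeasure_distr[OF T_Q] sets_Q space_Q emeasure_eq_measure)
  qed simp
  with T_Q erg show ?thesis
    by unfold_locales (auto simp: inv_sets_def sets_Q space_Q)
qed

lemma ergodic_cap_birkhoff_limit:
  assumes T: "T \<in> measurable M M" and erg: "ergodic_cap M T V"
    and Q: "Q \<in> ergodic_probs M T" and core: "measure Q \<in> core M V"
  shows "birkhoff_limit M T V Q"
  unfolding birkhoff_limit_def
proof (intro allI impI)
  fix f :: "'a \<Rightarrow> real"
  assume f: "integrable Q f"
  interpret ergodic_mpt Q T
    using T Q by (rule ergodic_probs_imp_ergodic_mpt)
  have sets_Q: "sets Q = sets M"
    using Q by (simp add: ergodic_probs_def)
  have space_Q: "space Q = space M"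
    using sets_Q by (rule sets_eq_imp_space_eq)
  define C where "C = {x \<in> space M. (\<lambda>n. birkhoff_sum T f n x / real n) \<longlonglongrightarrow> integral\<^sup>L Q f}"
  have "f \<in> borel_measurable M"
    using f measurable_cong_sets[OF sets_Q refl] by auto
  then have "C \<in> sets M"
    unfolding C_def by (intro sets_Collect_LIMSEQ borel_measurable_divide borel_measurable_birkhoff_sum T) auto
  have "(\<lambda>n. birkhoff_sum T f n x / real n) \<longlonglongrightarrow> c \<longleftrightarrow> (\<lambda>n. birkhoff_sum T f n (T x) / real n) \<longlonglongrightarrow> c"
    for x c by (rule LIMSEQ_average_shift_iff) (rule birkhoff_sum_Suc)
  then have "T -` C \<inter> space M = C"
    by (auto simp: C_def measurable_space[OF T])
  then have "C \<in> inv_sets M T"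
    using \<open>C \<in> sets M\<close> by (simp add: inv_sets_def)
  have "AE x in Q. x \<in> C"
    using birkhoff_ergodic[OF f] AE_space by eventually_elim (simp add: C_def space_Q)
  then have "measure Q C = 1"
    using \<open>C \<in> sets M\<close> sets_Q by (simp add: prob_eq_1)
  moreover have "measure Q C \<le> V C"
    using core \<open>C \<in> sets M\<close> by (simp add: core_def)
  ultimately have "V C \<noteq> 0"
    by simp
  then have "V (space M - C) = 0"
    using erg \<open>C \<in> inv_sets M T\<close> unfolding ergodic_cap_def by blast
  then show "cap_ae M V (\<lambda>\<omega>. (\<lambda>n. birkhoff_sum T f n \<omega> / real n) \<longlonglongrightarrow> integral\<^sup>L Q f)"
    unfolding cap_ae_def using \<open>C \<in> sets M\<close> by (intro bexI[of _ C]) (auto simp: C_def)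
qed

lemma birkhoff_limit_indicator:
  assumes "prob_space Q" and sets_Q: "sets Q = sets M" and "birkhoff_limit M T V Q" and A: "A \<in> sets M"
  shows "cap_ae M V (\<lambda>\<omega>. (\<lambda>n. birkhoff_sum T (indicator A) n \<omega> / real n) \<longlonglongrightarrow> measure Q A)"
proof -
  interpret prob_space Q
    by fact
  have "integrable Q (indicator A :: 'a \<Rightarrow> real)" and "integral\<^sup>L Q (indicator A) = measure Q A"
    using A sets_Q by (simp_all add: emeasure_eq_measure)
  then show ?thesis
    using assms(3) unfolding birkhoff_limit_def by metis
qed

lemma birkhoff_limit_unique:
  assumes up: "upper_probability M V"
    and Q1: "prob_space Q1" "sets Q1 = sets M" "birkhoff_limit M T V Q1"
    and Q2: "prob_space Q2" "sets Q2 = sets M" "birkhoff_limit M T V Q2"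
  shows "Q1 = Q2"
proof (rule measure_eqI)
  show "sets Q1 = sets Q2"
    using Q1 Q2 by simp
  fix A
  assume "A \<in> sets Q1"
  then have A: "A \<in> sets M"
    using Q1 by simp
  have "cap_ae M V (\<lambda>\<omega>. (\<lambda>n. birkhoff_sum T (indicator A) n \<omega> / real n) \<longlonglongrightarrow> measure Q1 A
      \<and> (\<lambda>n. birkhoff_sum T (indicator A) n \<omega> / real n) \<longlonglongrightarrow> measure Q2 A)"
    using birkhoff_limit_indicator[OF Q1 A] birkhoff_limit_indicator[OF Q2 A] by (rule cap_ae_conj[OF up])
  then obtain \<omega> where "(\<lambda>n. birkhoff_sum T (indicator A) n \<omega> / real n) \<longlonglongrightarrow> measure Q1 A"
    and "(\<lambda>n. birkhoff_sum T (indicator A) n \<omega> / real n) \<longlonglongrightarrow> measure Q2 A"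
    using cap_ae_imp_ex[OF upper_probability_capacity[OF up]] by blast
  then have "measure Q1 A = measure Q2 A"
    by (rule LIMSEQ_unique)
  then show "emeasure Q1 A = emeasure Q2 A"
    using Q1(1) Q2(1) by (simp add: finite_measure.emeasure_eq_measure prob_space.finite_measure)
qed

lemma birkhoff_sum_indicator_invariant:
  assumes T: "T \<in> measurable M M" and B: "B \<in> inv_sets M T" and \<omega>: "\<omega> \<in> space M"
  shows "birkhoff_sum T (indicator B) n \<omega> = real n * indicator B \<omega>"
proof -
  have "(T ^^ i) \<omega> \<in> B \<longleftrightarrow> \<omega> \<in> B" for i
    using \<omega>
  proof (induction i arbitrary: \<omega>)
    case (Suc i)
    then have "(T ^^ i) (T \<omega>) \<in> B \<longleftrightarrow> T \<omega> \<in> B"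
      using measurable_space[OF T] by blast
    also have "\<dots> \<longleftrightarrow> \<omega> \<in> B"
      using B Suc.prems unfolding inv_sets_def by blast
    finally show ?case
      by (simp add: funpow_Suc_right del: funpow.simps)
  qed simp
  then show ?thesis
    by (simp add: birkhoff_sum_def indicator_def)
qed

lemma birkhoff_limit_indicator_invariant:
  assumes T: "T \<in> measurable M M" and "prob_space Q" and "sets Q = sets M"
    and lim: "birkhoff_limit M T V Q" and B: "B \<in> inv_sets M T"
  shows "cap_ae M V (\<lambda>\<omega>. indicator B \<omega> = measure Q B)"
proof -
  have "B \<in> sets M"
    using B by (simp add: inv_sets_def)
  obtain A where A: "A \<in> sets M" and null: "V (space M - A) = 0"
    and conv: "\<And>\<omega>. \<omega> \<in> A \<Longrightarrow> (\<lambda>n. birkhoff_sum T (indicator B) n \<omega> / real n) \<longlonglongrightarrow> measure Q B"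
    using birkhoff_limit_indicator[OF assms(2,3) lim \<open>B \<in> sets M\<close>] unfolding cap_ae_def by metis
  have "indicator B \<omega> = measure Q B" if "\<omega> \<in> A" for \<omega>
  proof -
    have "\<omega> \<in> space M"
      using A that sets.sets_into_space by blast
    have "eventually (\<lambda>n. birkhoff_sum T (indicator B) n \<omega> / real n = indicator B \<omega>) sequentially"
      using eventually_gt_at_top[of 0]
      by eventually_elim (simp add: birkhoff_sum_indicator_invariant[OF T B \<open>\<omega> \<in> space M\<close>])
    then have "(\<lambda>n. birkhoff_sum T (indicator B) n \<omega> / real n) \<longlonglongrightarrow> indicator B \<omega>"
      by (rule tendsto_eventually)
    from LIMSEQ_unique[OF this conv[OF that]] show ?thesis .
  qed
  with A null show ?thesis
    unfolding cap_ae_def by blast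
qed

lemma birkhoff_limit_imp_ergodic_cap:
  assumes T: "T \<in> measurable M M" and up: "upper_probability M V" and inv: "T_invariant_cap M T V"
    and Q: "Q \<in> ergodic_probs M T" and lim: "birkhoff_limit M T V Q"
  shows "ergodic_cap M T V"
  unfolding ergodic_cap_def
proof (intro conjI[OF inv] ballI)
  fix B
  assume B: "B \<in> inv_sets M T"
  then have "B \<in> sets M"
    by (simp add: inv_sets_def)
  have "prob_space Q" and "sets Q = sets M" and Q01: "measure Q B = 0 \<or> measure Q B = 1"
    using Q B unfolding ergodic_probs_def by auto
  obtain A where A: "A \<in> sets M" and null: "V (space M - A) = 0"
    and val: "\<And>\<omega>. \<omega> \<in> A \<Longrightarrow> indicator B \<omega> = measure Q B"
    using birkhoff_limit_indicator_invariant[OF T \<open>prob_space Q\<close> \<open>sets Q = sets M\<close> lim B]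
    unfolding cap_ae_def by metis
  have cap: "capacity M V"
    using up by (rule upper_probability_capacity)
  from Q01 show "(V B = 0 \<or> V B = 1) \<and> (V B = 0 \<or> V (space M - B) = 0)"
  proof
    assume "measure Q B = 0"
    then have "B \<subseteq> space M - A"
      using val sets.sets_into_space[OF \<open>B \<in> sets M\<close>] by (force simp: indicator_def)
    then have "V B \<le> 0"
      using capacity_mono[OF cap \<open>B \<in> sets M\<close>, of "space M - A"] A null by auto
    then show ?thesis
      using capacity_nonneg[OF cap \<open>B \<in> sets M\<close>] by simp
  next
    assume "measure Q B = 1"
    then have "space M - B \<subseteq> space M - A"
      using val by (force simp: indicator_def)
    then have "V (space M - B) = 0"
      using capacity_mono[OF cap, of "space M - B" "space M - A"] capacity_nonneg[OF cap, of "space M - B"]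
        A null \<open>B \<in> sets M\<close> by auto
    moreover have "V B \<le> 1"
      using capacity_le_1[OF cap \<open>B \<in> sets M\<close>] .
    ultimately show ?thesis
      using upper_probability_compl[OF up \<open>B \<in> sets M\<close>] by simp
  qed
qed

theorem theorem3p3:
  fixes M :: "'a measure" and T :: "'a \<Rightarrow> 'a" and V :: "'a set \<Rightarrow> real"
  assumes "T \<in> measurable M M"
    and "upper_probability M V"
    and "T_invariant_cap M T V"
  shows "ergodic_cap M T V \<longleftrightarrow>
    (\<exists>!Q. Q \<in> ergodic_probs M T \<and> measure Q \<in> core M V \<and>
       (\<forall>f::'a \<Rightarrow> real. integrable Q f \<longrightarrow>
          cap_ae M V (\<lambda>\<omega>. (\<lambda>n. (\<Sum>i<n. f ((T ^^ i) \<omega>)) / real n) \<longlonglongrightarrow> integral\<^sup>L Q f)))"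
proof -
  have ergodic_probs: "prob_space Q" "sets Q = sets M" if "Q \<in> ergodic_probs M T" for Q
    using that by (simp_all add: ergodic_probs_def)
  have "(\<forall>f::'a \<Rightarrow> real. integrable Q f \<longrightarrow>
          cap_ae M V (\<lambda>\<omega>. (\<lambda>n. (\<Sum>i<n. f ((T ^^ i) \<omega>)) / real n) \<longlonglongrightarrow> integral\<^sup>L Q f))
      \<longleftrightarrow> birkhoff_limit M T V Q" for Q
    by (simp add: birkhoff_limit_def birkhoff_sum_def)
  then show ?thesis
  proof (simp only:, intro iffI)
    assume erg: "ergodic_cap M T V"
    obtain Q where Q: "prob_space Q" "sets Q = sets M" "measure Q \<in> core M V"
      and "\<And>A. A \<in> sets M \<Longrightarrow> measure Q (T -` A \<inter> space M) = measure Q A"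
      using exists_invariant_prob_in_core[OF assms] by metis
    then have "Q \<in> ergodic_probs M T"
      by (intro ergodic_cap_imp_ergodic_probs[OF erg])
    moreover have "birkhoff_limit M T V Q"
      using assms(1) erg \<open>Q \<in> ergodic_probs M T\<close> Q(3) by (rule ergodic_cap_birkhoff_limit)
    ultimately show "\<exists>!Q. Q \<in> ergodic_probs M T \<and> measure Q \<in> core M V \<and> birkhoff_limit M T V Q"
      using Q(3) birkhoff_limit_unique[OF assms(2) ergodic_probs _ ergodic_probs] by blast
  next
    assume "\<exists>!Q. Q \<in> ergodic_probs M T \<and> measure Q \<in> core M V \<and> birkhoff_limit M T V Q"
    then show "ergodic_cap M T V"
      using birkhoff_limit_imp_ergodic_cap[OF assms] by blast
  qed
qed

end
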